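(* Let $\mathfrak k$ be the maximal compact subalgebra of a Kac--Moody algebra over a field $F$ of characteristic $0$ with simply laced diagram, with Berman generators $X_1,\dots,X_n$, and let $\mathcal C$ be the class of generalized spin representations of $\mathfrak k$. Then: (a) $\mathcal C$ is closed under direct sums, quotients, duals (the dual of $\rho$ being $X\mapsto-\rho(X)^T$) and subrepresentations; (b) if $\rho_1,\rho_2,\rho_3\in\mathcal C$, then the assignment $X_i\mapsto 4\,\rho_1(X_i)\otimes\rho_2(X_i)\otimes\rho_3(X_i)$ defines a representation $\rho_4$ of $\mathfrak k$ which lies in $\mathcal C$; (c) if $\rho\in\mathcal C$ and $\varphi$ is a sign automorphism, a graph automorphism, or a Weyl group automorphism of $\mathfrak k$, then $\rho\circ\varphi\in\mathcal C$.
   Context: $L=F(I)$, $I^2=-1$. Berman's theorem: $\mathfrak k$ is the Lie algebra generated by $X_i=e_i-f_i$ with defining relations $[X_i,[X_i,X_j]]=-X_j$ for adjacent $v_i,v_j$ and $[X_i,X_j]=0$ for non-adjacent $i\ne j$. A generalized spin representation is a Lie algebra homomorphism $\rho:\mathfrak k\to\operatorname{End}(L^s)$ with $\rho(X_i)^2=-\tfrac14\mathrm{id}_s$ for all $i$. A sign automorphism is the automorphism $X_i\mapsto\epsilon_iX_i$ for fixed $\epsilon_i\in\{\pm1\}$. A graph automorphism is $X_i\mapsto X_{\pi(i)}$ for a permutation $\pi$ of the vertices preserving adjacency. A Weyl group automorphism is the restriction to $\mathfrak k$ of an element of the extended Weyl group $W^*=\langle s_i^*\rangle$, $s_i^*=\exp(\operatorname{ad}f_i)\exp(\operatorname{ad}(-e_i))\exp(\operatorname{ad}f_i)$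 (these commute with the Cartan--Chevalley involution and so preserve $\mathfrak k$). *)

theory Defs
  imports "Jordan_Normal_Form.Matrix"
begin

definition simply_laced :: "nat \<Rightarrow> (nat \<Rightarrow> nat \<Rightarrow> bool) \<Rightarrow> bool" where
  "simply_laced n adj \<longleftrightarrow> (\<forall>i<n. \<forall>j<n. adj i j \<longleftrightarrow> adj j i) \<and> (\<forall>i<n. \<not> adj i i)"

definition comm :: "'a::comm_ring mat \<Rightarrow> 'a mat \<Rightarrow> 'a mat" where
  "comm X Y = X * Y - Y * X"

text \<open>By Berman's theorem, a Lie algebra homomorphism from k to End(L^s) is the same as
an assignment X_i \<mapsto> A i of s\<times>s matrices satisfying the Berman relations.\<close>
definition berman_rep :: "nat \<Rightarrow> (nat \<Rightarrow> nat \<Rightarrow> bool) \<Rightarrow> nat \<Rightarrow> (nat \<Rightarrow> 'a::comm_ring_1 mat) \<Rightarrow> bool" where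
  "berman_rep n adj s A \<longleftrightarrow>
     (\<forall>i<n. A i \<in> carrier_mat s s) \<and>
     (\<forall>i<n. \<forall>j<n. adj i j \<longrightarrow> comm (A i) (comm (A i) (A j)) = - A j) \<and>
     (\<forall>i<n. \<forall>j<n. i \<noteq> j \<and> \<not> adj i j \<longrightarrow> comm (A i) (A j) = 0\<^sub>m s s)"

definition gen_spin :: "nat \<Rightarrow> (nat \<Rightarrow> nat \<Rightarrow> bool) \<Rightarrow> nat \<Rightarrow> (nat \<Rightarrow> 'a::field mat) \<Rightarrow> bool" where
  "gen_spin n adj s A \<longleftrightarrow> berman_rep n adj s A \<and>
     (\<forall>i<n. A i * A i = (- (1/4)) \<cdot>\<^sub>m 1\<^sub>m s)"

definition direct_sum_mat :: "'a::zero mat \<Rightarrow> 'a mat \<Rightarrow> 'a mat" where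
  "direct_sum_mat A B = four_block_mat A (0\<^sub>m (dim_row A) (dim_col B)) (0\<^sub>m (dim_row B) (dim_col A)) B"

definition kron :: "'a::times mat \<Rightarrow> 'a mat \<Rightarrow> 'a mat" where
  "kron A B = mat (dim_row A * dim_row B) (dim_col A * dim_col B)
     (\<lambda>(i, j). A $$ (i div dim_row B, j div dim_col B) * B $$ (i mod dim_row B, j mod dim_col B))"

text \<open>rho \<circ> s_i^* in terms of the images of the generators:
 s_i^*(X_i) = X_i, s_i^*(X_j) = -[X_i,X_j] for j adjacent to i, s_i^*(X_j) = X_j otherwise.\<close>
definition weyl_twist :: "(nat \<Rightarrow> nat \<Rightarrow> bool) \<Rightarrow> nat \<Rightarrow> (nat \<Rightarrow> 'a::comm_ring mat) \<Rightarrow> (nat \<Rightarrow> 'a mat)" where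
  "weyl_twist adj i A = (\<lambda>j. if j \<noteq> i \<and> adj i j then - comm (A i) (A j) else A j)"

end

theory Submission
  imports Defs
begin

text \<open>
  Over a field of characteristic 0 and given \<open>\<rho>(X\<^sub>i)\<^sup>2 = -1/4\<close>, the Berman relations
  are equivalent to Clifford-type relations: \<open>\<rho>(X\<^sub>i)\<close> and \<open>\<rho>(X\<^sub>j)\<close> anticommute for adjacent
  and commute for distinct non-adjacent vertices. Every closure property is checked on these
  relations. Quotients and subrepresentations inherit them through a one-sided invertible
  intertwiner; in the triple tensor product the signs multiply to \<open>\<sigma>\<^sup>3 = \<sigma>\<close> and the factor 4 gives
  \<open>16 (-1/4)\<^sup>3 = -1/4\<close>. The twist by \<open>s\<^sub>i\<^sup>*\<close> is conjugation by \<open>u = 1 - 2\<rho>(X\<^sub>i)\<close>, whose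
  inverse is \<open>1/2 + \<rho>(X\<^sub>i)\<close>: conjugation by \<open>u\<close> fixes every \<open>\<rho>(X\<^sub>j)\<close> commuting with
  \<open>\<rho>(X\<^sub>i)\<close> and sends an anticommuting one to \<open>-[\<rho>(X\<^sub>i), \<rho>(X\<^sub>j)] = -2\<rho>(X\<^sub>i)\<rho>(X\<^sub>j)\<close>.
\<close>

lemma smult_smult_mat: "(k :: 'a::semigroup_mult) \<cdot>\<^sub>m (l \<cdot>\<^sub>m A) = (k * l) \<cdot>\<^sub>m A"
  by (rule eq_matI) (auto simp: mult.assoc)

lemma one_smult_mat [simp]: "(1 :: 'a::monoid_mult) \<cdot>\<^sub>m A = A"
  by (rule eq_matI) auto

lemma uminus_eq_smult_mat: "- A = (- 1 :: 'a::ring_1) \<cdot>\<^sub>m A"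
  by (rule eq_matI) auto

lemma smult_mult_smult_mat:
  fixes A B :: "'a::comm_ring mat"
  assumes "A \<in> carrier_mat nr n" "B \<in> carrier_mat n nc"
  shows "(k \<cdot>\<^sub>m A) * (l \<cdot>\<^sub>m B) = (k * l) \<cdot>\<^sub>m (A * B)"
  using mult_smult_assoc_mat[OF assms(1) smult_carrier_mat[OF assms(2)]]
    mult_smult_distrib[OF assms] by (simp add: smult_smult_mat)

lemma smult_mat_cancel:
  fixes X Y :: "'a::field mat"
  assumes "k \<noteq> 0" "X \<in> carrier_mat nr nc" "Y \<in> carrier_mat nr nc" "k \<cdot>\<^sub>m X = k \<cdot>\<^sub>m Y"
  shows "X = Y"
proof (rule eq_matI)
  fix i j assume "i < dim_row Y" "j < dim_col Y"
  then have "k * X $$ (i, j) = k * Y $$ (i, j)"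
    using assms(2-4) by (metis index_smult_mat(1) carrier_matD)
  then show "X $$ (i, j) = Y $$ (i, j)" using assms(1) by simp
qed (use assms in auto)

lemma minus_eq_zero_mat_iff:
  fixes X Y :: "'a::group_add mat"
  assumes "X \<in> carrier_mat nr nc" "Y \<in> carrier_mat nr nc"
  shows "X - Y = 0\<^sub>m nr nc \<longleftrightarrow> X = Y"
proof
  assume "X - Y = 0\<^sub>m nr nc"
  then have "\<forall>i<nr. \<forall>j<nc. X $$ (i, j) - Y $$ (i, j) = 0"
    using assms by (metis carrier_matD index_minus_mat(1) index_zero_mat(1))
  then show "X = Y" using assms by (intro eq_matI) auto
qed (use assms in auto)

lemma transpose_smult_mat: "transpose_mat (k \<cdot>\<^sub>m A) = k \<cdot>\<^sub>m transpose_mat A"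
  by (rule eq_matI) auto

lemma neg_transpose_mult_neg_transpose:
  fixes A B :: "'a::comm_ring_1 mat"
  assumes "A \<in> carrier_mat s s" "B \<in> carrier_mat s s"
  shows "(- transpose_mat A) * (- transpose_mat B) = transpose_mat (B * A)"
  using assms by (simp add: transpose_mult)

lemma one_minus_smult_mult_mat:
  fixes a X :: "'a::comm_ring_1 mat"
  assumes a: "a \<in> carrier_mat s s" and X: "X \<in> carrier_mat s nc"
  shows "(1\<^sub>m s - c \<cdot>\<^sub>m a) * X = X - c \<cdot>\<^sub>m (a * X)"
  using a X by (simp add: minus_mult_distrib_mat[OF one_carrier_mat smult_carrier_mat[OF a] X]
      mult_smult_assoc_mat)

lemma mult_one_minus_smult_mat:
  fixes a X :: "'a::comm_ring_1 mat"
  assumes a: "a \<in> carrier_mat s s" and X: "X \<in> carrier_mat nr s"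
  shows "X * (1\<^sub>m s - c \<cdot>\<^sub>m a) = X - c \<cdot>\<^sub>m (X * a)"
  using a X by (simp add: mult_minus_distrib_mat[OF X one_carrier_mat smult_carrier_mat[OF a]]
      mult_smult_distrib)

lemma right_inverse_mat_of_surjective:
  fixes Q :: "'a::field mat"
  assumes Q: "Q \<in> carrier_mat t s" and surj: "\<forall>w \<in> carrier_vec t. \<exists>v \<in> carrier_vec s. Q *\<^sub>v v = w"
  obtains R where "R \<in> carrier_mat s t" "Q * R = 1\<^sub>m t"
proof -
  have "\<forall>j. \<exists>v. j < t \<longrightarrow> v \<in> carrier_vec s \<and> Q *\<^sub>v v = unit_vec t j"
    using surj unit_vec_carrier by blast
  then obtain f where f: "\<And>j. j < t \<Longrightarrow> f j \<in> carrier_vec s \<and> Q *\<^sub>v f j = unit_vec t j"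
    by metis
  define R where "R = mat s t (\<lambda>(i, j). f j $ i)"
  have col_R: "col R j = f j" if "j < t" for j
    using f[OF that] that unfolding R_def by (auto intro!: eq_vecI simp: col_mat carrier_vecD)
  have "R \<in> carrier_mat s t" by (simp add: R_def)
  moreover have "Q * R = 1\<^sub>m t"
  proof (rule eq_matI)
    fix i j assume i: "i < dim_row (1\<^sub>m t)" and j: "j < dim_col (1\<^sub>m t)"
    have "(Q * R) $$ (i, j) = (Q *\<^sub>v f j) $ i"
      using Q i j col_R by (simp add: R_def)
    then show "(Q * R) $$ (i, j) = 1\<^sub>m t $$ (i, j)"
      using f i j by simp
  qed (use Q in \<open>auto simp: R_def\<close>)
  ultimately show ?thesis by (rule that)
qed

lemma inj_on_mult_left_of_injective:
  fixes P :: "'a::field mat"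
  assumes P: "P \<in> carrier_mat s t" and inj: "\<forall>v \<in> carrier_vec t. P *\<^sub>v v = 0\<^sub>v s \<longrightarrow> v = 0\<^sub>v t"
  shows "inj_on (\<lambda>X. P * X) (carrier_mat t nc)"
proof (rule inj_onI)
  fix X Y assume X: "X \<in> carrier_mat t nc" and Y: "Y \<in> carrier_mat t nc" and eq: "P * X = P * Y"
  show "X = Y"
  proof (rule eq_matI)
    fix i j assume i: "i < dim_row Y" and j: "j < dim_col Y"
    have cols: "col X j \<in> carrier_vec t" "col Y j \<in> carrier_vec t" using X Y j by auto
    have "P *\<^sub>v col X j = P *\<^sub>v col Y j"
      using col_mult2[OF P X, of j] col_mult2[OF P Y, of j] eq j Y by simp
    then have "P *\<^sub>v (col X j - col Y j) = 0\<^sub>v s"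
      using P cols by (simp add: mult_minus_distrib_mat_vec)
    then have "col X j - col Y j = 0\<^sub>v t" using inj cols by simp
    then have "(col X j - col Y j) $ i = 0" using i Y by simp
    then show "X $$ (i, j) = Y $$ (i, j)" using i j X Y by simp
  qed (use X Y in auto)
qed

lemma mult_left_cancel_of_square_scalar:
  fixes a X Y :: "'a::field mat"
  assumes a: "a \<in> carrier_mat s s" and sq: "a * a = c \<cdot>\<^sub>m 1\<^sub>m s" and "c \<noteq> 0"
    and X: "X \<in> carrier_mat s nc" and Y: "Y \<in> carrier_mat s nc" and eq: "a * X = a * Y"
  shows "X = Y"
proof -
  have "c \<cdot>\<^sub>m Z = a * (a * Z)" if Z: "Z \<in> carrier_mat s nc" for Z
    using a Z mult_smult_assoc_mat[OF one_carrier_mat Z] by (simp add: sq flip: assoc_mult_mat)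
  then have "c \<cdot>\<^sub>m X = c \<cdot>\<^sub>m Y" using X Y eq by simp
  then show ?thesis using smult_mat_cancel \<open>c \<noteq> 0\<close> X Y by blast
qed

lemma comm_carrier_mat:
  "a \<in> carrier_mat s s \<Longrightarrow> b \<in> carrier_mat s s \<Longrightarrow> comm a b \<in> carrier_mat s s"
  unfolding comm_def by (simp add: minus_carrier_mat)

lemma comm_eq_zero_iff:
  fixes a b :: "'a::comm_ring mat"
  assumes "a \<in> carrier_mat s s" "b \<in> carrier_mat s s"
  shows "comm a b = 0\<^sub>m s s \<longleftrightarrow> a * b = b * a"
  using assms unfolding comm_def by (metis minus_eq_zero_mat_iff mult_carrier_mat)

lemma double_comm_eq_uminus_iff:
  fixes a b :: "'a::field_char_0 mat"
  assumes a: "a \<in> carrier_mat s s" and b: "b \<in> carrier_mat s s"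
    and sq: "a * a = (- (1/4)) \<cdot>\<^sub>m 1\<^sub>m s"
  shows "comm a (comm a b) = - b \<longleftrightarrow> b * a = - (a * b)"
proof -
  define P where "P = a * (b * a)"
  have P: "P \<in> carrier_mat s s" using a b by (simp add: P_def)
  have aab: "a * (a * b) = (- (1/4)) \<cdot>\<^sub>m b"
    using a b mult_smult_assoc_mat[OF one_carrier_mat b] by (simp add: sq flip: assoc_mult_mat)
  have baa: "(b * a) * a = (- (1/4)) \<cdot>\<^sub>m b"
    using a b mult_smult_distrib[OF b one_carrier_mat] by (simp add: sq)
  have ab: "a * b \<in> carrier_mat s s" and ba: "b * a \<in> carrier_mat s s" using a b by auto
  have "comm a (comm a b) = (a * (a * b) - a * (b * a)) - ((a * b) * a - (b * a) * a)"
    unfolding comm_def mult_minus_distrib_mat[OF a ab ba] minus_mult_distrib_mat[OF ab ba a] ..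
  also have "\<dots> = ((- (1/4)) \<cdot>\<^sub>m b - P) - (P - (- (1/4)) \<cdot>\<^sub>m b)"
    using a b by (simp add: aab baa P_def)
  finally have "comm a (comm a b) = - b \<longleftrightarrow>
      ((- (1/4)) \<cdot>\<^sub>m b - P) - (P - (- (1/4)) \<cdot>\<^sub>m b) = - b"
    by simp
  also have "\<dots> \<longleftrightarrow> P = (1/4) \<cdot>\<^sub>m b"
    using P b by (auto simp: mat_eq_iff field_simps)
  also have "(1/4) \<cdot>\<^sub>m b = - ((- (1/4)) \<cdot>\<^sub>m b)"
    using b by (auto simp: mat_eq_iff)
  also have "\<dots> = a * - (a * b)"
    using a b by (simp add: aab)
  also have "P = a * - (a * b) \<longleftrightarrow> b * a = - (a * b)"
  proof
    assume eq: "P = a * - (a * b)"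
    show "b * a = - (a * b)"
      by (rule mult_left_cancel_of_square_scalar[OF a sq _ _ _ eq[unfolded P_def]]) (use a b in auto)
  qed (simp add: P_def)
  finally show ?thesis .
qed

subsection \<open>Clifford form of the spin relations\<close>

definition spin_sign :: "(nat \<Rightarrow> nat \<Rightarrow> bool) \<Rightarrow> nat \<Rightarrow> nat \<Rightarrow> 'a::ring_1" where
  "spin_sign adj i j = (if adj i j then - 1 else 1)"

lemma spin_sign_mult_self [simp]: "spin_sign adj i j * spin_sign adj i j = 1"
  by (simp add: spin_sign_def)

definition spin_relations :: "nat \<Rightarrow> (nat \<Rightarrow> nat \<Rightarrow> bool) \<Rightarrow> nat \<Rightarrow> (nat \<Rightarrow> 'a::field mat) \<Rightarrow> bool" where
  "spin_relations n adj s A \<longleftrightarrow>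
     (\<forall>i<n. A i \<in> carrier_mat s s \<and> A i * A i = (- (1/4)) \<cdot>\<^sub>m 1\<^sub>m s) \<and>
     (\<forall>i<n. \<forall>j<n. i \<noteq> j \<longrightarrow> A j * A i = spin_sign adj i j \<cdot>\<^sub>m (A i * A j))"

lemma spin_relationsI:
  assumes "\<And>i. i < n \<Longrightarrow> A i \<in> carrier_mat s s"
    and "\<And>i. i < n \<Longrightarrow> A i * A i = (- (1/4)) \<cdot>\<^sub>m 1\<^sub>m s"
    and "\<And>i j. i < n \<Longrightarrow> j < n \<Longrightarrow> i \<noteq> j \<Longrightarrow> A j * A i = spin_sign adj i j \<cdot>\<^sub>m (A i * A j)"
  shows "spin_relations n adj s A"
  using assms unfolding spin_relations_def by blast

lemma spin_relationsD:
  assumes "spin_relations n adj s A" and "i < n"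
  shows spin_relations_carrier: "A i \<in> carrier_mat s s"
    and spin_relations_square: "A i * A i = (- (1/4)) \<cdot>\<^sub>m 1\<^sub>m s"
    and spin_relations_swap: "j < n \<Longrightarrow> i \<noteq> j \<Longrightarrow> A j * A i = spin_sign adj i j \<cdot>\<^sub>m (A i * A j)"
  using assms unfolding spin_relations_def by blast+

lemma spin_swap_iff_berman_relation:
  fixes a b :: "'a::field_char_0 mat"
  assumes a: "a \<in> carrier_mat s s" and b: "b \<in> carrier_mat s s"
    and sq: "a * a = (- (1/4)) \<cdot>\<^sub>m 1\<^sub>m s"
  shows "b * a = spin_sign adj i j \<cdot>\<^sub>m (a * b) \<longleftrightarrow>
    (adj i j \<longrightarrow> comm a (comm a b) = - b) \<and> (\<not> adj i j \<longrightarrow> comm a b = 0\<^sub>m s s)"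
  using double_comm_eq_uminus_iff[OF a b sq] comm_eq_zero_iff[OF a b]
  by (auto simp: spin_sign_def simp flip: uminus_eq_smult_mat)

lemma gen_spin_iff_spin_relations:
  fixes A :: "nat \<Rightarrow> 'a::field_char_0 mat"
  assumes irrefl: "\<forall>i<n. \<not> adj i i"
  shows "gen_spin n adj s A \<longleftrightarrow> spin_relations n adj s A"
proof -
  have "berman_rep n adj s A \<longleftrightarrow>
      (\<forall>i<n. \<forall>j<n. i \<noteq> j \<longrightarrow> A j * A i = spin_sign adj i j \<cdot>\<^sub>m (A i * A j))"
    if A: "\<forall>i<n. A i \<in> carrier_mat s s \<and> A i * A i = (- (1/4)) \<cdot>\<^sub>m 1\<^sub>m s"
  proof -
    have "A j * A i = spin_sign adj i j \<cdot>\<^sub>m (A i * A j) \<longleftrightarrow>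
        (adj i j \<longrightarrow> comm (A i) (comm (A i) (A j)) = - A j) \<and>
        (\<not> adj i j \<longrightarrow> comm (A i) (A j) = 0\<^sub>m s s)" if "i < n" "j < n" for i j
      using A that by (intro spin_swap_iff_berman_relation) auto
    then show ?thesis using A irrefl unfolding berman_rep_def by blast
  qed
  moreover have "gen_spin n adj s A \<longleftrightarrow>
      (\<forall>i<n. A i \<in> carrier_mat s s \<and> A i * A i = (- (1/4)) \<cdot>\<^sub>m 1\<^sub>m s) \<and> berman_rep n adj s A"
    unfolding gen_spin_def berman_rep_def by auto
  ultimately show ?thesis
    unfolding spin_relations_def by blast
qed

subsection \<open>Intertwiners, duals and automorphisms\<close>

lemma spin_relations_transfer:
  fixes A :: "nat \<Rightarrow> 'a::field mat" and \<Phi> \<Psi> :: "'a mat \<Rightarrow> 'a mat"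
  assumes A: "spin_relations n adj s A"
    and B: "\<And>i. i < n \<Longrightarrow> B i \<in> carrier_mat t t"
    and inj: "inj_on \<Phi> (carrier_mat t t)"
    and \<Phi>_smult: "\<And>k X. X \<in> carrier_mat t t \<Longrightarrow> \<Phi> (k \<cdot>\<^sub>m X) = k \<cdot>\<^sub>m \<Phi> X"
    and \<Psi>_smult: "\<And>k X. X \<in> carrier_mat s s \<Longrightarrow> \<Psi> (k \<cdot>\<^sub>m X) = k \<cdot>\<^sub>m \<Psi> X"
    and one: "\<Phi> (1\<^sub>m t) = \<Psi> (1\<^sub>m s)"
    and products: "\<And>i j. i < n \<Longrightarrow> j < n \<Longrightarrow> \<Phi> (B i * B j) = \<Psi> (A i * A j)"
  shows "spin_relations n adj t B"
proof (rule spin_relationsI)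
  fix i assume i: "i < n"
  show "B i \<in> carrier_mat t t" using B i .
  have "\<Phi> (B i * B i) = \<Phi> ((- (1/4)) \<cdot>\<^sub>m 1\<^sub>m t)"
    using products[OF i i] spin_relations_square[OF A i] by (simp add: \<Phi>_smult \<Psi>_smult one)
  then show "B i * B i = (- (1/4)) \<cdot>\<^sub>m 1\<^sub>m t"
    using inj B[OF i] by (simp add: inj_on_eq_iff)
next
  fix i j assume i: "i < n" and j: "j < n" and "i \<noteq> j"
  have "\<Phi> (B j * B i) = \<Psi> (spin_sign adj i j \<cdot>\<^sub>m (A i * A j))"
    using products[OF j i] spin_relations_swap[OF A i j \<open>i \<noteq> j\<close>] by simp
  also have "\<dots> = spin_sign adj i j \<cdot>\<^sub>m \<Phi> (B i * B j)"
    using products[OF i j] spin_relations_carrier[OF A i] spin_relations_carrier[OF A j]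
    by (simp add: \<Psi>_smult)
  also have "\<dots> = \<Phi> (spin_sign adj i j \<cdot>\<^sub>m (B i * B j))"
    using B[OF i] B[OF j] by (simp add: \<Phi>_smult)
  finally show "B j * B i = spin_sign adj i j \<cdot>\<^sub>m (B i * B j)"
    using inj B[OF i] B[OF j] by (simp add: inj_on_eq_iff)
qed

lemma spin_relations_intertwined_by_right_invertible:
  fixes A :: "nat \<Rightarrow> 'a::field mat"
  assumes A: "spin_relations n adj s A" and Q: "Q \<in> carrier_mat t s"
    and R: "R \<in> carrier_mat s t" "Q * R = 1\<^sub>m t"
    and B: "\<forall>i<n. B i \<in> carrier_mat t t \<and> Q * A i = B i * Q"
  shows "spin_relations n adj t B"
proof (rule spin_relations_transfer[OF A, where \<Phi> = "\<lambda>X. X * Q" and \<Psi> = "\<lambda>X. Q * X"])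
  show "inj_on (\<lambda>X. X * Q) (carrier_mat t t)"
  proof (rule inj_onI)
    fix X Y assume X: "X \<in> carrier_mat t t" and Y: "Y \<in> carrier_mat t t" and "X * Q = Y * Q"
    then have "(X * Q) * R = (Y * Q) * R" by simp
    then show "X = Y" using X Y Q R by simp
  qed
  fix i j assume i: "i < n" and j: "j < n"
  have Ai: "A i \<in> carrier_mat s s" and Aj: "A j \<in> carrier_mat s s"
    using spin_relations_carrier[OF A] i j by auto
  have Bi: "B i \<in> carrier_mat t t" and Bj: "B j \<in> carrier_mat t t" using B i j by auto
  have "B i * B j * Q = B i * (Q * A j)" using assoc_mult_mat[OF Bi Bj Q] B j by simp
  also have "\<dots> = (B i * Q) * A j" using assoc_mult_mat[OF Bi Q Aj] by simp
  also have "\<dots> = (Q * A i) * A j" using B i by simp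
  finally show "B i * B j * Q = Q * (A i * A j)" using Q Ai Aj by simp
qed (use B Q in \<open>auto simp: mult_smult_distrib mult_smult_assoc_mat\<close>)

lemma spin_relations_quotient:
  fixes A :: "nat \<Rightarrow> 'a::field mat"
  assumes A: "spin_relations n adj s A" and Q: "Q \<in> carrier_mat t s"
    and surj: "\<forall>w \<in> carrier_vec t. \<exists>v \<in> carrier_vec s. Q *\<^sub>v v = w"
    and B: "\<forall>i<n. B i \<in> carrier_mat t t \<and> Q * A i = B i * Q"
  shows "spin_relations n adj t B"
  using right_inverse_mat_of_surjective[OF Q surj]
    spin_relations_intertwined_by_right_invertible[OF A Q _ _ B] by metis

lemma spin_relations_subrepresentation:
  fixes A :: "nat \<Rightarrow> 'a::field mat"
  assumes A: "spin_relations n adj s A" and P: "P \<in> carrier_mat s t"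
    and inj: "\<forall>v \<in> carrier_vec t. P *\<^sub>v v = 0\<^sub>v s \<longrightarrow> v = 0\<^sub>v t"
    and B: "\<forall>i<n. B i \<in> carrier_mat t t \<and> A i * P = P * B i"
  shows "spin_relations n adj t B"
proof (rule spin_relations_transfer[OF A, where \<Phi> = "\<lambda>X. P * X" and \<Psi> = "\<lambda>X. X * P"])
  show "inj_on (\<lambda>X. P * X) (carrier_mat t t)" by (rule inj_on_mult_left_of_injective[OF P inj])
  fix i j assume i: "i < n" and j: "j < n"
  have Ai: "A i \<in> carrier_mat s s" and Aj: "A j \<in> carrier_mat s s"
    using spin_relations_carrier[OF A] i j by auto
  have Bi: "B i \<in> carrier_mat t t" and Bj: "B j \<in> carrier_mat t t" using B i j by auto
  have "P * (B i * B j) = (A i * P) * B j" using assoc_mult_mat[OF P Bi Bj] B i by simp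
  also have "\<dots> = A i * (A j * P)" using assoc_mult_mat[OF Ai P Bj] B j by simp
  finally show "P * (B i * B j) = A i * A j * P" using P Ai Aj by simp
qed (use B P in \<open>auto simp: mult_smult_distrib mult_smult_assoc_mat\<close>)

lemma spin_relations_dual:
  fixes A :: "nat \<Rightarrow> 'a::field mat"
  assumes A: "spin_relations n adj s A"
  shows "spin_relations n adj s (\<lambda>i. - transpose_mat (A i))"
proof (rule spin_relationsI)
  fix i assume i: "i < n"
  note Ai = spin_relations_carrier[OF A i]
  show "- transpose_mat (A i) \<in> carrier_mat s s" using Ai by simp
  show "(- transpose_mat (A i)) * (- transpose_mat (A i)) = (- (1/4)) \<cdot>\<^sub>m 1\<^sub>m s"
    using spin_relations_square[OF A i]
    by (simp add: neg_transpose_mult_neg_transpose[OF Ai Ai] transpose_smult_mat)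
next
  fix i j assume i: "i < n" and j: "j < n" and "i \<noteq> j"
  note Ai = spin_relations_carrier[OF A i] and Aj = spin_relations_carrier[OF A j]
  have "spin_sign adj i j \<cdot>\<^sub>m (A j * A i) = A i * A j"
    using spin_relations_swap[OF A i j \<open>i \<noteq> j\<close>] by (simp add: smult_smult_mat)
  then show "(- transpose_mat (A j)) * (- transpose_mat (A i)) =
      spin_sign adj i j \<cdot>\<^sub>m ((- transpose_mat (A i)) * (- transpose_mat (A j)))"
    by (simp add: neg_transpose_mult_neg_transpose[OF Ai Aj] neg_transpose_mult_neg_transpose[OF Aj Ai]
        flip: transpose_smult_mat)
qed

lemma spin_relations_sign:
  fixes A :: "nat \<Rightarrow> 'a::field mat"
  assumes A: "spin_relations n adj s A" and \<epsilon>: "\<forall>i<n. \<epsilon> i = 1 \<or> \<epsilon> i = - 1"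
  shows "spin_relations n adj s (\<lambda>i. \<epsilon> i \<cdot>\<^sub>m A i)"
proof (rule spin_relationsI)
  fix i assume i: "i < n"
  note Ai = spin_relations_carrier[OF A i]
  show "\<epsilon> i \<cdot>\<^sub>m A i \<in> carrier_mat s s" using Ai by simp
  have "\<epsilon> i * \<epsilon> i = 1" using \<epsilon> i by auto
  then show "(\<epsilon> i \<cdot>\<^sub>m A i) * (\<epsilon> i \<cdot>\<^sub>m A i) = (- (1/4)) \<cdot>\<^sub>m 1\<^sub>m s"
    using spin_relations_square[OF A i] by (simp add: smult_mult_smult_mat[OF Ai Ai])
next
  fix i j assume i: "i < n" and j: "j < n" and "i \<noteq> j"
  note Ai = spin_relations_carrier[OF A i] and Aj = spin_relations_carrier[OF A j]
  show "(\<epsilon> j \<cdot>\<^sub>m A j) * (\<epsilon> i \<cdot>\<^sub>m A i) = spin_sign adj i j \<cdot>\<^sub>m ((\<epsilon> i \<cdot>\<^sub>m A i) * (\<epsilon> j \<cdot>\<^sub>m A j))"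
    unfolding smult_mult_smult_mat[OF Ai Aj] smult_mult_smult_mat[OF Aj Ai]
      spin_relations_swap[OF A i j \<open>i \<noteq> j\<close>] smult_smult_mat
    by (simp only: mult.commute mult.left_commute)
qed

lemma spin_relations_permute:
  fixes A :: "nat \<Rightarrow> 'a::field mat"
  assumes A: "spin_relations n adj s A" and \<pi>: "bij_betw \<pi> {0..<n} {0..<n}"
    and adj: "\<forall>i<n. \<forall>j<n. adj (\<pi> i) (\<pi> j) \<longleftrightarrow> adj i j"
  shows "spin_relations n adj s (\<lambda>i. A (\<pi> i))"
proof (rule spin_relationsI)
  fix i assume "i < n"
  then have "\<pi> i < n" using bij_betw_apply[OF \<pi>] by simp
  then show "A (\<pi> i) \<in> carrier_mat s s" "A (\<pi> i) * A (\<pi> i) = (- (1/4)) \<cdot>\<^sub>m 1\<^sub>m s"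
    by (rule spin_relations_carrier[OF A], rule spin_relations_square[OF A])
next
  fix i j assume i: "i < n" and j: "j < n" and "i \<noteq> j"
  then have "\<pi> i < n" "\<pi> j < n" "\<pi> i \<noteq> \<pi> j"
    using bij_betw_apply[OF \<pi>] bij_betw_imp_inj_on[OF \<pi>] by (simp_all add: inj_on_eq_iff)
  then have "A (\<pi> j) * A (\<pi> i) = spin_sign adj (\<pi> i) (\<pi> j) \<cdot>\<^sub>m (A (\<pi> i) * A (\<pi> j))"
    by (rule spin_relations_swap[OF A])
  then show "A (\<pi> j) * A (\<pi> i) = spin_sign adj i j \<cdot>\<^sub>m (A (\<pi> i) * A (\<pi> j))"
    using adj i j by (simp add: spin_sign_def)
qed

subsection \<open>Direct sums\<close>

lemma direct_sum_mat_carrier: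
  "A \<in> carrier_mat nr1 nc1 \<Longrightarrow> B \<in> carrier_mat nr2 nc2 \<Longrightarrow>
    direct_sum_mat A B \<in> carrier_mat (nr1 + nr2) (nc1 + nc2)"
  unfolding direct_sum_mat_def by auto

lemma direct_sum_mat_mult:
  fixes X1 X2 Y1 Y2 :: "'a::semiring_0 mat"
  assumes X1: "X1 \<in> carrier_mat nr1 n1" and X2: "X2 \<in> carrier_mat n1 nc1"
    and Y1: "Y1 \<in> carrier_mat nr2 n2" and Y2: "Y2 \<in> carrier_mat n2 nc2"
  shows "direct_sum_mat X1 Y1 * direct_sum_mat X2 Y2 = direct_sum_mat (X1 * X2) (Y1 * Y2)"
proof -
  have "direct_sum_mat X1 Y1 * direct_sum_mat X2 Y2 =
      four_block_mat (X1 * X2 + 0\<^sub>m nr1 n2 * 0\<^sub>m n2 nc1) (X1 * 0\<^sub>m n1 nc2 + 0\<^sub>m nr1 n2 * Y2)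
        (0\<^sub>m nr2 n1 * X2 + Y1 * 0\<^sub>m n2 nc1) (0\<^sub>m nr2 n1 * 0\<^sub>m n1 nc2 + Y1 * Y2)"
    unfolding direct_sum_mat_def using X1 X2 Y1 Y2
    by (simp add: mult_four_block_mat[OF X1 zero_carrier_mat zero_carrier_mat Y1
          X2 zero_carrier_mat zero_carrier_mat Y2])
  also have "\<dots> = direct_sum_mat (X1 * X2) (Y1 * Y2)"
    unfolding direct_sum_mat_def using X1 X2 Y1 Y2 by simp
  finally show ?thesis .
qed

lemma direct_sum_mat_smult: "direct_sum_mat (k \<cdot>\<^sub>m A) (k \<cdot>\<^sub>m B) = (k :: 'a::semiring_0) \<cdot>\<^sub>m direct_sum_mat A B"
  unfolding direct_sum_mat_def by (rule eq_matI) auto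

lemma direct_sum_mat_one: "direct_sum_mat (1\<^sub>m s1) (1\<^sub>m s2) = (1\<^sub>m (s1 + s2) :: 'a::semiring_1 mat)"
  unfolding direct_sum_mat_def by (rule eq_matI) auto

lemma spin_relations_direct_sum:
  fixes A1 A2 :: "nat \<Rightarrow> 'a::field mat"
  assumes A1: "spin_relations n adj s1 A1" and A2: "spin_relations n adj s2 A2"
  shows "spin_relations n adj (s1 + s2) (\<lambda>i. direct_sum_mat (A1 i) (A2 i))"
proof (rule spin_relationsI)
  fix i assume i: "i < n"
  note A1i = spin_relations_carrier[OF A1 i] and A2i = spin_relations_carrier[OF A2 i]
  show "direct_sum_mat (A1 i) (A2 i) \<in> carrier_mat (s1 + s2) (s1 + s2)"
    using direct_sum_mat_carrier[OF A1i A2i] .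
  show "direct_sum_mat (A1 i) (A2 i) * direct_sum_mat (A1 i) (A2 i) = (- (1/4)) \<cdot>\<^sub>m 1\<^sub>m (s1 + s2)"
    unfolding direct_sum_mat_mult[OF A1i A1i A2i A2i] spin_relations_square[OF A1 i]
      spin_relations_square[OF A2 i] direct_sum_mat_smult direct_sum_mat_one ..
next
  fix i j assume i: "i < n" and j: "j < n" and "i \<noteq> j"
  note A1i = spin_relations_carrier[OF A1 i] and A2i = spin_relations_carrier[OF A2 i]
    and A1j = spin_relations_carrier[OF A1 j] and A2j = spin_relations_carrier[OF A2 j]
  show "direct_sum_mat (A1 j) (A2 j) * direct_sum_mat (A1 i) (A2 i) =
      spin_sign adj i j \<cdot>\<^sub>m (direct_sum_mat (A1 i) (A2 i) * direct_sum_mat (A1 j) (A2 j))"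
    unfolding direct_sum_mat_mult[OF A1i A1j A2i A2j] direct_sum_mat_mult[OF A1j A1i A2j A2i]
      spin_relations_swap[OF A1 i j \<open>i \<noteq> j\<close>] spin_relations_swap[OF A2 i j \<open>i \<noteq> j\<close>]
      direct_sum_mat_smult ..
qed

subsection \<open>Kronecker products\<close>

lemma sum_lessThan_mult_split:
  fixes f :: "nat \<Rightarrow> 'a::comm_monoid_add"
  shows "(\<Sum>l<m * p. f l) = (\<Sum>u<m. \<Sum>v<p. f (u * p + v))"
proof -
  have "(\<Sum>l<m * p. f l) = (\<Sum>u<m. \<Sum>l\<in>{u * p..<u * p + p}. f l)"
    by (rule sum.nat_group[symmetric])
  also have "\<dots> = (\<Sum>u<m. \<Sum>v<p. f (u * p + v))"
    by (simp add: sum.atLeastLessThan_shift_0 atLeast0LessThan comp_def)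
  finally show ?thesis .
qed

lemma mod_less_of_less_mult: "(i :: nat) < m * p \<Longrightarrow> i mod p < p"
  by (cases "p = 0") auto

lemma kron_carrier_mat:
  "A \<in> carrier_mat m n \<Longrightarrow> B \<in> carrier_mat p q \<Longrightarrow> kron A B \<in> carrier_mat (m * p) (n * q)"
  unfolding kron_def by auto

lemma index_kron_mat:
  assumes "A \<in> carrier_mat m n" "B \<in> carrier_mat p q" "i < m * p" "j < n * q"
  shows "kron A B $$ (i, j) = A $$ (i div p, j div q) * B $$ (i mod p, j mod q)"
  using assms unfolding kron_def by auto

lemma kron_mult:
  fixes A B C D :: "'a::comm_semiring_0 mat"
  assumes A: "A \<in> carrier_mat m n" and C: "C \<in> carrier_mat n k"
    and B: "B \<in> carrier_mat p q" and D: "D \<in> carrier_mat q r"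
  shows "kron A B * kron C D = kron (A * C) (B * D)"
proof (rule eq_matI)
  have AC: "A * C \<in> carrier_mat m k" and BD: "B * D \<in> carrier_mat p r" using A B C D by auto
  fix i j assume "i < dim_row (kron (A * C) (B * D))" "j < dim_col (kron (A * C) (B * D))"
  then have i: "i < m * p" and j: "j < k * r" using kron_carrier_mat[OF AC BD] by auto
  then have idx: "i div p < m" "i mod p < p" "j div r < k" "j mod r < r"
    by (auto simp: less_mult_imp_div_less mod_less_of_less_mult)
  have "(kron A B * kron C D) $$ (i, j) = (\<Sum>l<n * q. kron A B $$ (i, l) * kron C D $$ (l, j))"
    using kron_carrier_mat[OF A B] kron_carrier_mat[OF C D] i j
    by (auto simp: scalar_prod_def atLeast0LessThan intro!: sum.cong)
  also have "\<dots> = (\<Sum>u<n. \<Sum>v<q. (A $$ (i div p, u) * B $$ (i mod p, v)) *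
      (C $$ (u, j div r) * D $$ (v, j mod r)))"
  proof (unfold sum_lessThan_mult_split, intro sum.cong refl)
    fix u v assume "u \<in> {..<n}" "v \<in> {..<q}"
    then have "u * q + v < n * q" "(u * q + v) div q = u" "(u * q + v) mod q = v"
      by (auto simp flip: div_less_iff_less_mult)
    then show "kron A B $$ (i, u * q + v) * kron C D $$ (u * q + v, j) =
        A $$ (i div p, u) * B $$ (i mod p, v) * (C $$ (u, j div r) * D $$ (v, j mod r))"
      using A B C D i j by (simp add: index_kron_mat)
  qed
  also have "\<dots> = (\<Sum>u<n. A $$ (i div p, u) * C $$ (u, j div r)) *
      (\<Sum>v<q. B $$ (i mod p, v) * D $$ (v, j mod r))"
    by (simp add: sum_product ac_simps)
  also have "\<dots> = kron (A * C) (B * D) $$ (i, j)"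
    using index_kron_mat[OF AC BD i j] A B C D idx by (simp add: scalar_prod_def atLeast0LessThan)
  finally show "(kron A B * kron C D) $$ (i, j) = kron (A * C) (B * D) $$ (i, j)" .
qed (use A B C D in \<open>simp_all add: kron_def\<close>)

lemma kron_smult_left: "kron (k \<cdot>\<^sub>m A) B = (k :: 'a::comm_semiring_1) \<cdot>\<^sub>m kron A B"
  unfolding kron_def by (rule eq_matI) (auto simp: ac_simps less_mult_imp_div_less mod_less_of_less_mult)

lemma kron_smult_right: "kron A (k \<cdot>\<^sub>m B) = (k :: 'a::comm_semiring_1) \<cdot>\<^sub>m kron A B"
  unfolding kron_def by (rule eq_matI) (auto simp: ac_simps less_mult_imp_div_less mod_less_of_less_mult)

lemma kron_one: "kron (1\<^sub>m m) (1\<^sub>m p) = (1\<^sub>m (m * p) :: 'a::semiring_1 mat)"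
proof (rule eq_matI)
  fix i j assume "i < dim_row (1\<^sub>m (m * p) :: 'a mat)" "j < dim_col (1\<^sub>m (m * p) :: 'a mat)"
  then have i: "i < m * p" and j: "j < m * p" by auto
  then have "i div p < m" "j div p < m" "i mod p < p" "j mod p < p"
    by (auto simp: less_mult_imp_div_less mod_less_of_less_mult)
  moreover have "i div p = j div p \<and> i mod p = j mod p \<longleftrightarrow> i = j"
    by (metis div_mult_mod_eq)
  moreover have "kron (1\<^sub>m m) (1\<^sub>m p) $$ (i, j) =
      (1\<^sub>m m :: 'a mat) $$ (i div p, j div p) * (1\<^sub>m p :: 'a mat) $$ (i mod p, j mod p)"
    using i j by (intro index_kron_mat) auto
  ultimately show "kron (1\<^sub>m m) (1\<^sub>m p) $$ (i, j) = (1\<^sub>m (m * p) :: 'a mat) $$ (i, j)"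
    using i j by auto
qed (simp_all add: kron_def)

lemma spin_relations_triple_kron:
  fixes A1 A2 A3 :: "nat \<Rightarrow> 'a::field_char_0 mat"
  assumes A1: "spin_relations n adj s1 A1" and A2: "spin_relations n adj s2 A2"
    and A3: "spin_relations n adj s3 A3"
  shows "spin_relations n adj (s1 * s2 * s3) (\<lambda>i. 4 \<cdot>\<^sub>m kron (kron (A1 i) (A2 i)) (A3 i))"
proof -
  note carrier = spin_relations_carrier[OF A1] spin_relations_carrier[OF A2] spin_relations_carrier[OF A3]
  have kron3: "kron (kron (A1 i) (A2 i)) (A3 i) \<in> carrier_mat (s1 * s2 * s3) (s1 * s2 * s3)"
    if "i < n" for i
    using carrier[OF that] by (intro kron_carrier_mat) auto
  have products: "(4 \<cdot>\<^sub>m kron (kron (A1 i) (A2 i)) (A3 i)) * (4 \<cdot>\<^sub>m kron (kron (A1 j) (A2 j)) (A3 j))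
      = 16 \<cdot>\<^sub>m kron (kron (A1 i * A1 j) (A2 i * A2 j)) (A3 i * A3 j)" if "i < n" "j < n" for i j
  proof -
    note i = carrier[OF that(1)] and j = carrier[OF that(2)]
    have "kron (A1 i) (A2 i) * kron (A1 j) (A2 j) = kron (A1 i * A1 j) (A2 i * A2 j)"
      using kron_mult[OF i(1) j(1) i(2) j(2)] .
    moreover have "kron (kron (A1 i) (A2 i)) (A3 i) * kron (kron (A1 j) (A2 j)) (A3 j) =
        kron (kron (A1 i) (A2 i) * kron (A1 j) (A2 j)) (A3 i * A3 j)"
      using kron_mult[OF kron_carrier_mat[OF i(1) i(2)] kron_carrier_mat[OF j(1) j(2)] i(3) j(3)] .
    ultimately show ?thesis
      unfolding smult_mult_smult_mat[OF kron3[OF that(1)] kron3[OF that(2)]] by simp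
  qed
  show ?thesis
  proof (rule spin_relationsI)
    fix i assume i: "i < n"
    show "4 \<cdot>\<^sub>m kron (kron (A1 i) (A2 i)) (A3 i) \<in> carrier_mat (s1 * s2 * s3) (s1 * s2 * s3)"
      using kron3[OF i] by simp
    show "(4 \<cdot>\<^sub>m kron (kron (A1 i) (A2 i)) (A3 i)) * (4 \<cdot>\<^sub>m kron (kron (A1 i) (A2 i)) (A3 i)) =
        (- (1/4)) \<cdot>\<^sub>m 1\<^sub>m (s1 * s2 * s3)"
      unfolding products[OF i i] spin_relations_square[OF A1 i] spin_relations_square[OF A2 i]
        spin_relations_square[OF A3 i]
      by (simp add: kron_smult_left kron_smult_right kron_one smult_smult_mat)
  next
    fix i j assume i: "i < n" and j: "j < n" and "i \<noteq> j"
    have "spin_sign adj i j * spin_sign adj i j * spin_sign adj i j = (spin_sign adj i j :: 'a)"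
      by simp
    then show "(4 \<cdot>\<^sub>m kron (kron (A1 j) (A2 j)) (A3 j)) * (4 \<cdot>\<^sub>m kron (kron (A1 i) (A2 i)) (A3 i)) =
        spin_sign adj i j \<cdot>\<^sub>m
          ((4 \<cdot>\<^sub>m kron (kron (A1 i) (A2 i)) (A3 i)) * (4 \<cdot>\<^sub>m kron (kron (A1 j) (A2 j)) (A3 j)))"
      unfolding products[OF i j] products[OF j i] spin_relations_swap[OF A1 i j \<open>i \<noteq> j\<close>]
        spin_relations_swap[OF A2 i j \<open>i \<noteq> j\<close>] spin_relations_swap[OF A3 i j \<open>i \<noteq> j\<close>]
      by (simp add: kron_smult_left kron_smult_right smult_smult_mat ac_simps)
  qed
qed

subsection \<open>Weyl group automorphisms\<close>

lemma one_minus_two_smult_mat_right_inverse: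
  fixes a :: "'a::field_char_0 mat"
  assumes a: "a \<in> carrier_mat s s" and sq: "a * a = (- (1/4)) \<cdot>\<^sub>m 1\<^sub>m s"
  shows "(1\<^sub>m s - 2 \<cdot>\<^sub>m a) * ((1/2) \<cdot>\<^sub>m 1\<^sub>m s + a) = 1\<^sub>m s"
proof -
  have v: "(1/2) \<cdot>\<^sub>m 1\<^sub>m s + a \<in> carrier_mat s s" using a by simp
  have av: "a * ((1/2) \<cdot>\<^sub>m 1\<^sub>m s + a) = (1/2) \<cdot>\<^sub>m a + (- (1/4)) \<cdot>\<^sub>m 1\<^sub>m s"
    using a by (simp add: mult_add_distrib_mat[OF a smult_carrier_mat[OF one_carrier_mat] a]
        mult_smult_distrib[OF a one_carrier_mat] sq)
  show ?thesis
    unfolding one_minus_smult_mult_mat[OF a v] av using a by (auto simp: mat_eq_iff)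
qed

lemma one_minus_smult_mat_commute:
  fixes a x :: "'a::comm_ring_1 mat"
  assumes a: "a \<in> carrier_mat s s" and x: "x \<in> carrier_mat s s" and xa: "x * a = a * x"
  shows "(1\<^sub>m s - c \<cdot>\<^sub>m a) * x = x * (1\<^sub>m s - c \<cdot>\<^sub>m a)"
  using a x by (simp add: one_minus_smult_mult_mat mult_one_minus_smult_mat xa)

lemma one_minus_two_smult_mat_conj_anticommuting:
  fixes a x :: "'a::field_char_0 mat"
  assumes a: "a \<in> carrier_mat s s" and x: "x \<in> carrier_mat s s"
    and sq: "a * a = (- (1/4)) \<cdot>\<^sub>m 1\<^sub>m s" and xa: "x * a = - (a * x)"
  shows "(1\<^sub>m s - 2 \<cdot>\<^sub>m a) * x = (- comm a x) * (1\<^sub>m s - 2 \<cdot>\<^sub>m a)"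
proof -
  have ax: "a * x \<in> carrier_mat s s" using a x by simp
  have twisted: "- comm a x = (- 2) \<cdot>\<^sub>m (a * x)"
    using ax unfolding comm_def xa by (auto simp: mat_eq_iff)
  have axa: "(a * x) * a = (1/4) \<cdot>\<^sub>m x"
  proof -
    have "(a * x) * a = - (a * (a * x))" using a x by (simp add: xa)
    also have "\<dots> = - ((- (1/4)) \<cdot>\<^sub>m x)"
      using a x mult_smult_assoc_mat[OF one_carrier_mat x] by (simp add: sq flip: assoc_mult_mat)
    finally show ?thesis using x by (auto simp: mat_eq_iff)
  qed
  have "(- comm a x) * (1\<^sub>m s - 2 \<cdot>\<^sub>m a) = (- 2) \<cdot>\<^sub>m (a * x) + x"
    unfolding twisted mult_one_minus_smult_mat[OF a smult_carrier_mat[OF ax]]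
      mult_smult_assoc_mat[OF ax a] axa
    using x ax by (auto simp: mat_eq_iff)
  also have "\<dots> = (1\<^sub>m s - 2 \<cdot>\<^sub>m a) * x"
    using a x by (simp add: one_minus_smult_mult_mat) (auto simp: mat_eq_iff)
  finally show ?thesis ..
qed

lemma weyl_twist_intertwined:
  fixes A :: "nat \<Rightarrow> 'a::field_char_0 mat"
  assumes A: "spin_relations n adj s A" and i: "i < n" and j: "j < n"
  shows "(1\<^sub>m s - 2 \<cdot>\<^sub>m A i) * A j = weyl_twist adj i A j * (1\<^sub>m s - 2 \<cdot>\<^sub>m A i)"
proof (cases "j \<noteq> i \<and> adj i j")
  case True
  then have "A j * A i = - (A i * A j)"
    using spin_relations_swap[OF A i j] by (simp add: spin_sign_def uminus_eq_smult_mat)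
  then show ?thesis
    using True spin_relationsD[OF A i] spin_relations_carrier[OF A j]
    by (simp add: weyl_twist_def one_minus_two_smult_mat_conj_anticommuting)
next
  case False
  then have "A j * A i = A i * A j"
    using spin_relations_swap[OF A i j] by (cases "i = j") (auto simp: spin_sign_def)
  moreover have "weyl_twist adj i A j = A j" using False by (auto simp: weyl_twist_def)
  ultimately show ?thesis
    using spin_relations_carrier[OF A i] spin_relations_carrier[OF A j]
    by (simp add: one_minus_smult_mat_commute)
qed

lemma spin_relations_weyl_twist:
  fixes A :: "nat \<Rightarrow> 'a::field_char_0 mat"
  assumes A: "spin_relations n adj s A" and i: "i < n"
  shows "spin_relations n adj s (weyl_twist adj i A)"
proof (rule spin_relations_intertwined_by_right_invertible[OF A])
  have a: "A i \<in> carrier_mat s s" using spin_relations_carrier[OF A i] .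
  show "1\<^sub>m s - 2 \<cdot>\<^sub>m A i \<in> carrier_mat s s" "(1/2) \<cdot>\<^sub>m 1\<^sub>m s + A i \<in> carrier_mat s s"
    using a by auto
  show "(1\<^sub>m s - 2 \<cdot>\<^sub>m A i) * ((1/2) \<cdot>\<^sub>m 1\<^sub>m s + A i) = 1\<^sub>m s"
    using one_minus_two_smult_mat_right_inverse[OF a spin_relations_square[OF A i]] .
  show "\<forall>j<n. weyl_twist adj i A j \<in> carrier_mat s s \<and>
      (1\<^sub>m s - 2 \<cdot>\<^sub>m A i) * A j = weyl_twist adj i A j * (1\<^sub>m s - 2 \<cdot>\<^sub>m A i)"
    using a spin_relations_carrier[OF A] weyl_twist_intertwined[OF A i]
    by (simp add: weyl_twist_def comm_carrier_mat)
qed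

lemma spin_relations_fold_weyl_twist:
  fixes A :: "nat \<Rightarrow> 'a::field_char_0 mat"
  assumes "spin_relations n adj s A" and "set w \<subseteq> {0..<n}"
  shows "spin_relations n adj s (fold (weyl_twist adj) w A)"
  using assms by (induction w arbitrary: A) (auto intro: spin_relations_weyl_twist)

theorem mainTheorem7:
  fixes n :: nat and adj :: "nat \<Rightarrow> nat \<Rightarrow> bool"
  assumes sl: "simply_laced n adj"
    and imag: "\<exists>I :: 'a::field_char_0. I * I = - 1"
  shows
    \<comment> \<open>(a) direct sums\<close>
    "(\<forall>s1 s2 (A1 :: nat \<Rightarrow> 'a mat) A2. gen_spin n adj s1 A1 \<and> gen_spin n adj s2 A2 \<longrightarrow>
        gen_spin n adj (s1 + s2) (\<lambda>i. direct_sum_mat (A1 i) (A2 i)))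
   \<and> \<comment> \<open>(a) quotients\<close>
    (\<forall>s t (A :: nat \<Rightarrow> 'a mat) B Q. gen_spin n adj s A \<and> Q \<in> carrier_mat t s \<and>
        (\<forall>w \<in> carrier_vec t. \<exists>v \<in> carrier_vec s. Q *\<^sub>v v = w) \<and>
        (\<forall>i<n. B i \<in> carrier_mat t t \<and> Q * A i = B i * Q) \<longrightarrow> gen_spin n adj t B)
   \<and> \<comment> \<open>(a) duals\<close>
    (\<forall>s (A :: nat \<Rightarrow> 'a mat). gen_spin n adj s A \<longrightarrow>
        gen_spin n adj s (\<lambda>i. - transpose_mat (A i)))
   \<and> \<comment> \<open>(a) subrepresentations\<close>
    (\<forall>s t (A :: nat \<Rightarrow> 'a mat) B P. gen_spin n adj s A \<and> P \<in> carrier_mat s t \<and>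
        (\<forall>v \<in> carrier_vec t. P *\<^sub>v v = 0\<^sub>v s \<longrightarrow> v = 0\<^sub>v t) \<and>
        (\<forall>i<n. B i \<in> carrier_mat t t \<and> A i * P = P * B i) \<longrightarrow> gen_spin n adj t B)
   \<and> \<comment> \<open>(b) triple tensor products\<close>
    (\<forall>s1 s2 s3 (A1 :: nat \<Rightarrow> 'a mat) A2 A3.
        gen_spin n adj s1 A1 \<and> gen_spin n adj s2 A2 \<and> gen_spin n adj s3 A3 \<longrightarrow>
        gen_spin n adj (s1 * s2 * s3) (\<lambda>i. 4 \<cdot>\<^sub>m kron (kron (A1 i) (A2 i)) (A3 i)))
   \<and> \<comment> \<open>(c) sign automorphisms\<close>
    (\<forall>s (A :: nat \<Rightarrow> 'a mat) (\<epsilon> :: nat \<Rightarrow> 'a). gen_spin n adj s A \<and> (\<forall>i<n. \<epsilon> i = 1 \<or> \<epsilon> i = - 1) \<longrightarrow>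
        gen_spin n adj s (\<lambda>i. \<epsilon> i \<cdot>\<^sub>m A i))
   \<and> \<comment> \<open>(c) graph automorphisms\<close>
    (\<forall>s (A :: nat \<Rightarrow> 'a mat) \<pi>. gen_spin n adj s A \<and> bij_betw \<pi> {0..<n} {0..<n} \<and>
        (\<forall>i<n. \<forall>j<n. adj (\<pi> i) (\<pi> j) \<longleftrightarrow> adj i j) \<longrightarrow>
        gen_spin n adj s (\<lambda>i. A (\<pi> i)))
   \<and> \<comment> \<open>(c) Weyl group automorphisms (products of generators s_i^*)\<close>
    (\<forall>s (A :: nat \<Rightarrow> 'a mat) (w :: nat list). gen_spin n adj s A \<and> set w \<subseteq> {0..<n} \<longrightarrow>
        gen_spin n adj s (fold (weyl_twist adj) w A))"
proof -
  have "\<forall>i<n. \<not> adj i i" using sl by (simp add: simply_laced_def)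
  then have gen_spin_iff: "gen_spin n adj s A \<longleftrightarrow> spin_relations n adj s A"
    for s and A :: "nat \<Rightarrow> 'a mat"
    by (rule gen_spin_iff_spin_relations)
  show ?thesis
    unfolding gen_spin_iff
    by (intro conjI allI impI; (elim conjE)?)
      (blast intro: spin_relations_direct_sum spin_relations_quotient spin_relations_dual
        spin_relations_subrepresentation spin_relations_triple_kron spin_relations_sign
        spin_relations_permute spin_relations_fold_weyl_twist)+
qed

end
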